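(* Let $n=2k+1$ for an integer $k\ge 2$, and let $\sigma_n$ be the multiset consisting of $k$ copies of $1$ and $k+1$ copies of $-k/(k+1)$. Then $\sum_{\lambda\in\sigma_n}\lambda=0$ (counted with multiplicity), and $\sigma_n$ is not realizable.
   Context: A multiset $\sigma=\{\lambda_1,\dots,\lambda_n\}$ of complex numbers is realizable if there exists an $n\times n$ matrix with all entries real and nonnegative whose eigenvalues, counted with algebraic multiplicity, are exactly $\lambda_1,\dots,\lambda_n$. *)

theory Defs
  imports "Jordan_Normal_Form.Char_Poly" "HOL-Library.Multiset"
begin

text \<open>A multiset of complex numbers (with multiplicity) is realizable if it is
  exactly the multiset of eigenvalues (with algebraic multiplicity) of a square
  real matrix with nonnegative entries, i.e. the complex characteristic polynomial
  of that matrix is the product of (X - lambda) over the multiset.\<close>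

definition realizable :: "complex multiset \<Rightarrow> bool" where
  "realizable \<sigma> \<longleftrightarrow>
     (\<exists>A :: real mat. A \<in> carrier_mat (size \<sigma>) (size \<sigma>) \<and>
        (\<forall>i j. i < size \<sigma> \<longrightarrow> j < size \<sigma> \<longrightarrow> A $$ (i, j) \<ge> 0) \<and>
        char_poly (map_mat complex_of_real A) = (\<Prod>x\<in>#\<sigma>. [:-x, 1:]))"

definition sigma_n :: "nat \<Rightarrow> complex multiset" where
  "sigma_n k = replicate_mset k 1 + replicate_mset (k + 1) (- (of_nat k / of_nat (k + 1)))"

end

theory Submission
  imports Defs "Jordan_Normal_Form.Schur_Decomposition"
begin

text \<open>Suppose a nonnegative matrix \<open>A\<close> realizes \<open>\<sigma>\<^sub>n\<close>. Its trace is the eigenvalue sum \<open>0\<close>,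
  so its diagonal vanishes, and \<open>M = (A + c I) / (1 + c)\<close> with \<open>c = k / (k + 1)\<close> is a
  nonnegative matrix with constant diagonal \<open>k / (2k + 1)\<close> and spectrum in \<open>{0, 1}\<close>, i.e.
  \<open>M\<^sup>k\<^sup>+\<^sup>1 (M - I)\<^sup>k = 0\<close>. Restrict \<open>M\<close> to a minimal closed set of indices of its digraph:
  the principal submatrix \<open>W\<close> is irreducible with positive diagonal, hence primitive, and it
  is still annihilated by \<open>x\<^sup>k\<^sup>+\<^sup>1 (x - 1)\<^sup>k\<close>. Therefore \<open>tr W\<^sup>m\<close> is independent of \<open>m \<ge> 1\<close>,
  which bounds the entries of all powers of \<open>W\<close>; bounded powers exclude nontrivial Jordan
  blocks at \<open>1\<close>, so some power of \<open>W\<close> is a positive idempotent, and such a matrix has trace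
  \<open>1\<close>. Hence \<open>s k / (2k + 1) = 1\<close> for the size \<open>s\<close> of \<open>W\<close>, which is impossible for \<open>k \<ge> 2\<close>.\<close>

section \<open>Traces, similarity and triangular matrices\<close>

lemma index_mult_mat_sum:
  assumes "X \<in> carrier_mat a s" "Y \<in> carrier_mat s b" "i < a" "j < b"
  shows "(X * Y) $$ (i,j) = (\<Sum>l = 0..<s. X $$ (i,l) * Y $$ (l,j))"
  using assms by (subst index_mult_mat) (auto simp: scalar_prod_def intro!: sum.cong)

lemma pow_mat_add:
  assumes X: "X \<in> carrier_mat n n"
  shows "X ^\<^sub>m (a + b) = X ^\<^sub>m a * X ^\<^sub>m b"
proof (induction b)
  case 0
  then show ?case using X by simp
next
  case (Suc b)
  have "X ^\<^sub>m (a + Suc b) = (X ^\<^sub>m a * X ^\<^sub>m b) * X" using Suc by simp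
  also have "\<dots> = X ^\<^sub>m a * (X ^\<^sub>m b * X)" using X by (simp add: assoc_mult_mat[of _ n n _ n _ n])
  finally show ?case by simp
qed

lemma mult_eq_add_mult_minus_one:
  fixes X W :: "'a::comm_ring_1 mat"
  assumes X: "X \<in> carrier_mat s s" and W: "W \<in> carrier_mat s s"
  shows "X * W = X + X * (W - 1\<^sub>m s)"
  using X W by (subst mult_minus_distrib_mat[of X s s]) (auto intro!: eq_matI)

definition trace :: "'a::comm_ring_1 mat \<Rightarrow> 'a" where
  "trace A = (\<Sum>i = 0..<dim_row A. A $$ (i,i))"

lemma trace_eq_sum_list_diag_mat: "trace A = sum_list (diag_mat A)"
  unfolding trace_def diag_mat_def by (simp add: sum_set_upt_conv_sum_list_nat[symmetric])

lemma trace_of_real_mat: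
  assumes "A \<in> carrier_mat n n"
  shows "trace (map_mat complex_of_real A) = complex_of_real (trace A)"
  unfolding trace_def using assms by (auto intro!: sum.cong)

lemma trace_mult_comm:
  assumes X: "X \<in> carrier_mat s s" and Y: "Y \<in> carrier_mat s s"
  shows "trace (X * Y) = trace (Y * X)"
proof -
  have "trace (X * Y) = (\<Sum>i = 0..<s. \<Sum>l = 0..<s. X $$ (i,l) * Y $$ (l,i))"
    unfolding trace_def using X Y by (intro sum.cong) (auto simp del: index_mult_mat(1) intro!: index_mult_mat_sum)
  also have "\<dots> = (\<Sum>l = 0..<s. \<Sum>i = 0..<s. Y $$ (l,i) * X $$ (i,l))"
    by (subst sum.swap) (simp add: mult.commute)
  also have "\<dots> = trace (Y * X)"
    unfolding trace_def using X Y
    by (intro sum.cong) (auto simp del: index_mult_mat(1) intro!: index_mult_mat_sum[symmetric])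
  finally show ?thesis .
qed

lemma trace_similar_mat_wit:
  assumes "similar_mat_wit A B P Q"
  shows "trace A = trace B"
proof -
  define n where "n = dim_row A"
  from similar_mat_witD[OF n_def assms]
  have QP: "Q * P = 1\<^sub>m n" and AB: "A = P * B * Q"
    and B: "B \<in> carrier_mat n n" and P: "P \<in> carrier_mat n n" and Q: "Q \<in> carrier_mat n n"
    by auto
  have "trace A = trace (Q * (P * B))"
    unfolding AB using B P Q by (intro trace_mult_comm) auto
  also have "Q * (P * B) = B"
    using B P Q QP by (subst assoc_mult_mat[symmetric, of Q n n P n B n]) auto
  finally show ?thesis .
qed

lemma similar_mat_wit_one:
  assumes wit: "similar_mat_wit A B P Q" and A: "A \<in> carrier_mat n n"
  shows "similar_mat_wit (1\<^sub>m n) (1\<^sub>m n) P Q"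
proof -
  note w = similar_mat_witD2[OF A wit]
  show ?thesis by (rule similar_mat_witI[OF w(1,2)]) (use w in auto)
qed

lemma similar_mat_wit_minus:
  fixes A :: "'a::comm_ring_1 mat"
  assumes wit: "similar_mat_wit A B P Q" and wit': "similar_mat_wit A' B' P Q"
    and A: "A \<in> carrier_mat n n" and A': "A' \<in> carrier_mat n n"
  shows "similar_mat_wit (A - A') (B - B') P Q"
proof -
  note w = similar_mat_witD2[OF A wit] and w' = similar_mat_witD2[OF A' wit']
  have "P * (B - B') * Q = P * B * Q - P * B' * Q"
    using w w' by (simp add: mult_minus_distrib_mat[of _ n n] minus_mult_distrib_mat[of _ n n])
  then show ?thesis
    using w w' by (intro similar_mat_witI[of P Q n]) (auto simp: minus_carrier_mat)
qed

lemma similar_mat_wit_mult: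
  assumes wit: "similar_mat_wit A B P Q" and wit': "similar_mat_wit A' B' P Q"
    and A: "A \<in> carrier_mat n n" and A': "A' \<in> carrier_mat n n"
  shows "similar_mat_wit (A * A') (B * B') P Q"
proof -
  note w = similar_mat_witD2[OF A wit] and w' = similar_mat_witD2[OF A' wit']
  have QP: "Q * (P * Z) = Z" if "Z \<in> carrier_mat n n" for Z
    using that w by (subst assoc_mult_mat[symmetric, of Q n n P n Z n]) auto
  have "A * A' = P * (B * B') * Q"
    using w w' QP[of "B' * Q"] by (simp add: assoc_mult_mat[of _ n n _ n _ n])
  then show ?thesis
    using w w' by (intro similar_mat_witI[of P Q n]) auto
qed

lemma similar_mat_wit_annihilated:
  fixes A :: "'a::comm_ring_1 mat"
  assumes wit: "similar_mat_wit A B P Q" and A: "A \<in> carrier_mat n n"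
    and ann: "B ^\<^sub>m p * (B - 1\<^sub>m n) ^\<^sub>m q = 0\<^sub>m n n"
  shows "A ^\<^sub>m p * (A - 1\<^sub>m n) ^\<^sub>m q = 0\<^sub>m n n"
proof -
  note w = similar_mat_witD2[OF A wit]
  have C: "A ^\<^sub>m p * (A - 1\<^sub>m n) ^\<^sub>m q \<in> carrier_mat n n"
    using A by (simp add: minus_carrier_mat mult_carrier_mat[of _ n n])
  have "similar_mat_wit (A ^\<^sub>m p * (A - 1\<^sub>m n) ^\<^sub>m q) (B ^\<^sub>m p * (B - 1\<^sub>m n) ^\<^sub>m q) P Q"
    using A by (intro similar_mat_wit_mult[where n = n] similar_mat_wit_pow
        similar_mat_wit_minus[where n = n] similar_mat_wit_one[OF wit A] wit)
      (auto simp: minus_carrier_mat)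
  then have "A ^\<^sub>m p * (A - 1\<^sub>m n) ^\<^sub>m q = P * 0\<^sub>m n n * Q"
    unfolding ann by (rule similar_mat_witD2(3)[OF C])
  also have "\<dots> = 0\<^sub>m n n" using w by simp
  finally show ?thesis .
qed

lemma upper_triangular_mult:
  assumes X: "X \<in> carrier_mat s s" and Y: "Y \<in> carrier_mat s s"
    and ut: "upper_triangular X" "upper_triangular Y"
  shows "upper_triangular (X * Y)"
proof
  fix i j assume ij: "j < i" "i < dim_row (X * Y)"
  have "(X * Y) $$ (i,j) = (\<Sum>l = 0..<s. X $$ (i,l) * Y $$ (l,j))"
    using X Y ij by (intro index_mult_mat_sum[where a = s and b = s]) auto
  also have "\<dots> = 0"
  proof (intro sum.neutral ballI)
    fix l assume "l \<in> {0..<s}"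
    then show "X $$ (i,l) * Y $$ (l,j) = 0"
      using ij X Y upper_triangularD[OF ut(1), of l i] upper_triangularD[OF ut(2), of j l]
      by (cases "l < i") auto
  qed
  finally show "(X * Y) $$ (i,j) = 0" .
qed

lemma upper_triangular_mult_diag:
  assumes X: "X \<in> carrier_mat s s" and Y: "Y \<in> carrier_mat s s"
    and ut: "upper_triangular X" "upper_triangular Y" and i: "i < s"
  shows "(X * Y) $$ (i,i) = X $$ (i,i) * Y $$ (i,i)"
proof -
  have "(X * Y) $$ (i,i) = (\<Sum>l = 0..<s. X $$ (i,l) * Y $$ (l,i))"
    using X Y i by (intro index_mult_mat_sum) auto
  also have "\<dots> = (\<Sum>l\<in>{i}. X $$ (i,l) * Y $$ (l,i))"
  proof (rule sum.mono_neutral_right)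
    show "\<forall>l\<in>{0..<s} - {i}. X $$ (i,l) * Y $$ (l,i) = 0"
    proof
      fix l assume "l \<in> {0..<s} - {i}"
      then show "X $$ (i,l) * Y $$ (l,i) = 0"
        using X Y i upper_triangularD[OF ut(1), of l i] upper_triangularD[OF ut(2), of i l]
        by (cases "l < i") auto
    qed
  qed (use i in auto)
  finally show ?thesis by simp
qed

lemma upper_triangular_pow:
  assumes X: "X \<in> carrier_mat s s" and ut: "upper_triangular X"
  shows "upper_triangular (X ^\<^sub>m m)"
proof (induction m)
  case (Suc m)
  then show ?case using upper_triangular_mult[OF pow_carrier_mat[OF X] X _ ut] by simp
qed simp

lemma upper_triangular_pow_diag:
  assumes X: "X \<in> carrier_mat s s" and ut: "upper_triangular X" and i: "i < s"
  shows "(X ^\<^sub>m m) $$ (i,i) = X $$ (i,i) ^ m"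
proof (induction m)
  case 0
  then show ?case using X i by simp
next
  case (Suc m)
  have "(X ^\<^sub>m Suc m) $$ (i,i) = (X ^\<^sub>m m) $$ (i,i) * X $$ (i,i)"
    using upper_triangular_mult_diag[OF pow_carrier_mat[OF X] X upper_triangular_pow[OF X ut] ut i]
    by simp
  then show ?case using Suc.IH by (simp only: power_Suc2)
qed

text \<open>A triangular matrix with diagonal \<open>0, \<dots>, 0, 1, \<dots>, 1\<close> (\<open>p\<close> zeros) satisfies
  Cayley--Hamilton: \<open>G\<^sub>j\<close>, the product of the first \<open>j\<close> factors, has its first \<open>j\<close> columns zero.\<close>

lemma upper_triangular_annihilated:
  fixes T :: "'a::comm_ring_1 mat"
  assumes T: "T \<in> carrier_mat s s" and ut: "upper_triangular T" and "p \<le> s"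
    and diag0: "\<And>i. i < p \<Longrightarrow> T $$ (i,i) = 0"
    and diag1: "\<And>i. p \<le> i \<Longrightarrow> i < s \<Longrightarrow> T $$ (i,i) = 1"
  shows "T ^\<^sub>m p * (T - 1\<^sub>m s) ^\<^sub>m (s - p) = 0\<^sub>m s s"
proof -
  define F where "F j = (if j < p then T else T - 1\<^sub>m s)" for j
  define G where "G j = T ^\<^sub>m (min j p) * (T - 1\<^sub>m s) ^\<^sub>m (j - p)" for j
  have T1: "T - 1\<^sub>m s \<in> carrier_mat s s" using T by (simp add: minus_carrier_mat)
  have F: "F j \<in> carrier_mat s s" for j unfolding F_def using T T1 by auto
  have G: "G j \<in> carrier_mat s s" for j unfolding G_def using T T1 by auto
  have F_lower: "F j $$ (m,l) = 0" if "l < m" "m < s" for j m l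
    using that T upper_triangularD[OF ut, of l m] unfolding F_def by auto
  have F_diag: "F j $$ (j,j) = 0" if "j < s" for j
    using that T diag0 diag1[of j] unfolding F_def by auto
  have G_step: "G (Suc j) = G j * F j" for j
  proof (cases "j < p")
    case True
    then have "G (Suc j) = T ^\<^sub>m (Suc j) * 1\<^sub>m s" "G j = T ^\<^sub>m j * 1\<^sub>m s"
      unfolding G_def using T1 by auto
    then show ?thesis using True T unfolding F_def by simp
  next
    case False
    then have "G (Suc j) = T ^\<^sub>m p * ((T - 1\<^sub>m s) ^\<^sub>m (j - p) * (T - 1\<^sub>m s))"
      "G j = T ^\<^sub>m p * (T - 1\<^sub>m s) ^\<^sub>m (j - p)"
      unfolding G_def by (auto simp: Suc_diff_le)
    then show ?thesis using False T T1 unfolding F_def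
      by (simp add: assoc_mult_mat[of _ s s _ s _ s])
  qed
  have G_zero: "G j $$ (i,l) = 0" if "i < s" "l < j" "j \<le> s" for i l j
    using that
  proof (induction j arbitrary: l)
    case (Suc j)
    have "G (Suc j) $$ (i,l) = (\<Sum>m = 0..<s. G j $$ (i,m) * F j $$ (m,l))"
      unfolding G_step using G F Suc.prems by (intro index_mult_mat_sum[where a = s and b = s]) auto
    also have "\<dots> = 0"
    proof (intro sum.neutral ballI)
      fix m assume "m \<in> {0..<s}"
      then have m: "m < s" by simp
      consider "m < j" | "l < m" | "m = j" "l = j" using Suc.prems(2) by linarith
      then show "G j $$ (i,m) * F j $$ (m,l) = 0"
        by cases (use Suc m F_lower F_diag in auto)
    qed
    finally show ?case .
  qed simp
  have "G s = 0\<^sub>m s s" using G_zero G[of s] by (intro eq_matI) auto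
  moreover have "G s = T ^\<^sub>m p * (T - 1\<^sub>m s) ^\<^sub>m (s - p)"
    unfolding G_def using \<open>p \<le> s\<close> by simp
  ultimately show ?thesis by simp
qed

section \<open>Spectra and annihilating polynomials\<close>

lemma schur_triangularization:
  fixes A :: "complex mat"
  assumes "A \<in> carrier_mat n n" "char_poly A = (\<Prod>a\<leftarrow>es. [:-a, 1:])"
  obtains T P Q where "similar_mat_wit A T P Q" "upper_triangular T" "diag_mat T = es"
proof -
  obtain T P Q where sd: "schur_decomposition A es = (T, P, Q)"
    using prod_cases3 by blast
  note schur = schur_decomposition[OF assms sd]
  show ?thesis
    using schur[THEN conjunct1] schur[THEN conjunct2, THEN conjunct1]
      schur[THEN conjunct2, THEN conjunct2]
    by (rule that)
qed

lemma trace_eq_sum_list_eigenvalues: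
  fixes A :: "complex mat"
  assumes "A \<in> carrier_mat n n" "char_poly A = (\<Prod>a\<leftarrow>es. [:-a, 1:])"
  shows "trace A = sum_list es"
proof -
  obtain T P Q where wit: "similar_mat_wit A T P Q" and "upper_triangular T" and diag: "diag_mat T = es"
    by (rule schur_triangularization[OF assms])
  have "trace A = trace T" by (rule trace_similar_mat_wit[OF wit])
  also have "\<dots> = sum_list es" unfolding trace_eq_sum_list_diag_mat diag ..
  finally show ?thesis .
qed

lemma two_eigenvalues_annihilated:
  fixes A :: "complex mat"
  assumes A: "A \<in> carrier_mat n n" and "u \<noteq> v"
    and cp: "char_poly A = (\<Prod>a\<leftarrow>replicate p u @ replicate q v. [:-a, 1:])"
  defines "Y \<equiv> (1 / (v - u)) \<cdot>\<^sub>m (A - u \<cdot>\<^sub>m 1\<^sub>m n)"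
  shows "Y ^\<^sub>m p * (Y - 1\<^sub>m n) ^\<^sub>m q = 0\<^sub>m n n"
proof -
  obtain T P Q where wit: "similar_mat_wit A T P Q" and ut: "upper_triangular T"
    and diag: "diag_mat T = replicate p u @ replicate q v"
    by (rule schur_triangularization[OF A cp])
  have T: "T \<in> carrier_mat n n" using similar_mat_witD2[OF A wit] by auto
  have n: "n = p + q" using arg_cong[OF diag, of length] T unfolding diag_mat_def by simp
  have T_diag: "T $$ (i,i) = (if i < p then u else v)" if "i < n" for i
    using arg_cong[OF diag, of "\<lambda>xs. xs ! i"] T that n unfolding diag_mat_def
    by (simp add: nth_append)
  define T' where "T' = (1 / (v - u)) \<cdot>\<^sub>m (T - u \<cdot>\<^sub>m 1\<^sub>m n)"
  have wit': "similar_mat_wit Y T' P Q"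
    unfolding Y_def T'_def using A
    by (intro similar_mat_wit_smult similar_mat_wit_minus[where n = n] wit
        similar_mat_wit_one[OF wit A]) auto
  have "T' \<in> carrier_mat n n" using T unfolding T'_def by (simp add: minus_carrier_mat)
  moreover have "upper_triangular T'"
  proof (rule upper_triangularI)
    fix i j assume "j < i" "i < dim_row T'"
    then show "T' $$ (i,j) = 0" using T upper_triangularD[OF ut] unfolding T'_def by auto
  qed
  moreover have "T' $$ (i,i) = (if i < p then 0 else 1)" if "i < n" for i
    using T_diag[OF that] that T \<open>u \<noteq> v\<close> unfolding T'_def by simp
  ultimately have "T' ^\<^sub>m p * (T' - 1\<^sub>m n) ^\<^sub>m (n - p) = 0\<^sub>m n n"
    using n by (intro upper_triangular_annihilated) auto
  moreover have "Y \<in> carrier_mat n n" using A unfolding Y_def by (simp add: minus_carrier_mat)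
  ultimately show ?thesis using similar_mat_wit_annihilated[OF wit'] n by simp
qed

lemma annihilated_eigenvalue_01:
  fixes A :: "'a::field mat"
  assumes A: "A \<in> carrier_mat n n" and ann: "A ^\<^sub>m p * (A - 1\<^sub>m n) ^\<^sub>m q = 0\<^sub>m n n"
    and "eigenvalue A x"
  shows "x = 0 \<or> x = 1"
proof -
  obtain v where ev: "eigenvector A v x" using \<open>eigenvalue A x\<close> unfolding eigenvalue_def by blast
  then have v: "v \<in> carrier_vec n" "v \<noteq> 0\<^sub>v n" and Av: "A *\<^sub>v v = x \<cdot>\<^sub>v v"
    unfolding eigenvector_def using A by auto
  have A1: "A - 1\<^sub>m n \<in> carrier_mat n n" using A by (simp add: minus_carrier_mat)
  have "(A - 1\<^sub>m n) *\<^sub>v v = A *\<^sub>v v - 1\<^sub>m n *\<^sub>v v"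
    using A v by (subst minus_mult_distrib_mat_vec[of _ n n]) auto
  also have "\<dots> = (x - 1) \<cdot>\<^sub>v v" unfolding Av using v by (intro eq_vecI) (auto simp: algebra_simps)
  finally have ev1: "eigenvector (A - 1\<^sub>m n) v (x - 1)"
    unfolding eigenvector_def using v A by auto
  have "0\<^sub>m n n *\<^sub>v v = A ^\<^sub>m p *\<^sub>v ((A - 1\<^sub>m n) ^\<^sub>m q *\<^sub>v v)"
    unfolding ann[symmetric] using A A1 v by (intro assoc_mult_mat_vec[of _ n n _ n]) auto
  also have "\<dots> = (x - 1) ^ q \<cdot>\<^sub>v (x ^ p \<cdot>\<^sub>v v)"
    unfolding eigenvector_pow[OF A1 ev1] eigenvector_pow[OF A ev, symmetric]
    using A v by (intro mult_mat_vec[of _ n n]) auto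
  finally have eq: "0\<^sub>m n n *\<^sub>v v = (x - 1) ^ q \<cdot>\<^sub>v (x ^ p \<cdot>\<^sub>v v)" .
  obtain i where i: "i < n" "v $ i \<noteq> 0" using v by (metis eq_vecI carrier_vecD index_zero_vec)
  have "((x - 1) ^ q \<cdot>\<^sub>v (x ^ p \<cdot>\<^sub>v v)) $ i = 0" unfolding eq[symmetric] using i v by simp
  then have "(x - 1) ^ q * x ^ p = 0" using i v by simp
  then show ?thesis by auto
qed

lemma trace_pow_annihilated_complex:
  fixes A :: "complex mat"
  assumes A: "A \<in> carrier_mat n n" and ann: "A ^\<^sub>m p * (A - 1\<^sub>m n) ^\<^sub>m q = 0\<^sub>m n n"
    and "m \<noteq> 0"
  shows "trace (A ^\<^sub>m m) = trace A"
proof -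
  obtain es where cp: "char_poly A = (\<Prod>a\<leftarrow>es. [:-a, 1:])"
    using char_poly_factorized[OF A] by blast
  obtain T P Q where wit: "similar_mat_wit A T P Q" and ut: "upper_triangular T"
    and diag: "diag_mat T = es"
    by (rule schur_triangularization[OF A cp])
  have T: "T \<in> carrier_mat n n" using similar_mat_witD2[OF A wit] by simp
  have diag_01: "T $$ (i,i) = 0 \<or> T $$ (i,i) = 1" if "i < n" for i
  proof -
    have "T $$ (i,i) \<in> set es" using T that unfolding diag[symmetric] diag_mat_def by simp
    then have "poly (char_poly A) (T $$ (i,i)) = 0" unfolding cp by (rule linear_poly_root)
    then have "eigenvalue A (T $$ (i,i))" using eigenvalue_root_char_poly[OF A] by simp
    then show ?thesis by (rule annihilated_eigenvalue_01[OF A ann])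
  qed
  have "trace (A ^\<^sub>m m) = trace (T ^\<^sub>m m)"
    by (rule trace_similar_mat_wit[OF similar_mat_wit_pow[OF wit]])
  also have "\<dots> = (\<Sum>i = 0..<n. T $$ (i,i) ^ m)"
    unfolding trace_def using T by (intro sum.cong) (auto simp: upper_triangular_pow_diag[OF T ut])
  also have "\<dots> = (\<Sum>i = 0..<n. T $$ (i,i))"
  proof (intro sum.cong refl)
    fix i assume "i \<in> {0..<n}"
    then show "T $$ (i,i) ^ m = T $$ (i,i)" using diag_01[of i] \<open>m \<noteq> 0\<close> by auto
  qed
  also have "\<dots> = trace T" unfolding trace_def using T by simp
  also have "\<dots> = trace A" by (rule trace_similar_mat_wit[OF wit, symmetric])
  finally show ?thesis .
qed

lemma of_real_mat_annihilated_iff: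
  fixes A :: "real mat"
  assumes A: "A \<in> carrier_mat n n"
  shows "map_mat complex_of_real A ^\<^sub>m p * (map_mat complex_of_real A - 1\<^sub>m n) ^\<^sub>m q = 0\<^sub>m n n
    \<longleftrightarrow> A ^\<^sub>m p * (A - 1\<^sub>m n) ^\<^sub>m q = 0\<^sub>m n n"
proof -
  have A1: "A - 1\<^sub>m n \<in> carrier_mat n n" using A by (simp add: minus_carrier_mat)
  have "map_mat complex_of_real (A ^\<^sub>m p * (A - 1\<^sub>m n) ^\<^sub>m q)
      = map_mat complex_of_real (A ^\<^sub>m p) * map_mat complex_of_real ((A - 1\<^sub>m n) ^\<^sub>m q)"
    by (rule of_real_hom.mat_hom_mult[OF pow_carrier_mat[OF A] pow_carrier_mat[OF A1]])
  also have "map_mat complex_of_real (A ^\<^sub>m p) = map_mat complex_of_real A ^\<^sub>m p"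
    by (rule of_real_hom.mat_hom_pow[OF A])
  also have "map_mat complex_of_real ((A - 1\<^sub>m n) ^\<^sub>m q)
      = map_mat complex_of_real (A - 1\<^sub>m n) ^\<^sub>m q"
    by (rule of_real_hom.mat_hom_pow[OF A1])
  also have "map_mat complex_of_real (A - 1\<^sub>m n) = map_mat complex_of_real A - 1\<^sub>m n"
    using A by (intro eq_matI) auto
  finally have hom: "map_mat complex_of_real (A ^\<^sub>m p * (A - 1\<^sub>m n) ^\<^sub>m q)
      = map_mat complex_of_real A ^\<^sub>m p * (map_mat complex_of_real A - 1\<^sub>m n) ^\<^sub>m q" .
  have zero: "map_mat complex_of_real (0\<^sub>m n n) = 0\<^sub>m n n" by (intro eq_matI) auto
  show ?thesis
    unfolding hom[symmetric] zero[symmetric] by (metis of_real_hom.mat_hom_inj)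
qed

lemma trace_pow_annihilated:
  fixes A :: "real mat"
  assumes A: "A \<in> carrier_mat n n" and ann: "A ^\<^sub>m p * (A - 1\<^sub>m n) ^\<^sub>m q = 0\<^sub>m n n"
    and "m \<noteq> 0"
  shows "trace (A ^\<^sub>m m) = trace A"
proof -
  have "complex_of_real (trace (A ^\<^sub>m m)) = trace (map_mat complex_of_real (A ^\<^sub>m m))"
    by (rule trace_of_real_mat[OF pow_carrier_mat[OF A], symmetric])
  also have "\<dots> = trace (map_mat complex_of_real A ^\<^sub>m m)"
    unfolding of_real_hom.mat_hom_pow[OF A] ..
  also have "\<dots> = trace (map_mat complex_of_real A)"
    using A ann \<open>m \<noteq> 0\<close> of_real_mat_annihilated_iff[OF A]
    by (intro trace_pow_annihilated_complex[where n = n and p = p and q = q]) auto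
  finally show ?thesis unfolding trace_of_real_mat[OF A] by simp
qed

section \<open>Nonnegative matrices\<close>

lemma nonneg_pow_mat:
  fixes A :: "real mat"
  assumes A: "A \<in> carrier_mat n n"
    and nonneg: "\<And>i j. i < n \<Longrightarrow> j < n \<Longrightarrow> A $$ (i,j) \<ge> 0"
  shows "i < n \<Longrightarrow> j < n \<Longrightarrow> (A ^\<^sub>m m) $$ (i,j) \<ge> 0"
proof (induction m arbitrary: i j)
  case 0
  then show ?case using A by simp
next
  case (Suc m)
  have "(A ^\<^sub>m m * A) $$ (i,j) = (\<Sum>l = 0..<n. (A ^\<^sub>m m) $$ (i,l) * A $$ (l,j))"
    using A Suc by (intro index_mult_mat_sum) auto
  also have "\<dots> \<ge> 0" using Suc nonneg by (intro sum_nonneg) auto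
  finally show ?case by simp
qed

lemma index_mult_mat_ge:
  fixes X Y :: "real mat"
  assumes X: "X \<in> carrier_mat n n" and Y: "Y \<in> carrier_mat n n"
    and nonneg_X: "\<And>i j. i < n \<Longrightarrow> j < n \<Longrightarrow> X $$ (i,j) \<ge> 0"
    and nonneg_Y: "\<And>i j. i < n \<Longrightarrow> j < n \<Longrightarrow> Y $$ (i,j) \<ge> 0"
    and "i < n" "j < n" "l < n"
  shows "(X * Y) $$ (i,j) \<ge> X $$ (i,l) * Y $$ (l,j)"
proof -
  have "(X * Y) $$ (i,j) = (\<Sum>m = 0..<n. X $$ (i,m) * Y $$ (m,j))"
    using assms by (intro index_mult_mat_sum) auto
  also have "\<dots> \<ge> X $$ (i,l) * Y $$ (l,j)"
    by (rule member_le_sum) (use assms in auto)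
  finally show ?thesis .
qed

text \<open>With \<open>t\<close> the least ratio of column \<open>j\<close> to column \<open>0\<close>, the vector
  \<open>y = E\<^sub>\<star>\<^sub>j - t E\<^sub>\<star>\<^sub>0\<close> is nonnegative and vanishes at some \<open>u\<close>; idempotence gives
  \<open>(E y)\<^sub>u = y\<^sub>u = 0\<close>, and the positive row \<open>u\<close> of \<open>E\<close> then forces \<open>y = 0\<close>.\<close>

lemma positive_idempotent_columns_proportional:
  fixes E :: "real mat"
  assumes E: "E \<in> carrier_mat s s" and pos: "\<And>i j. i < s \<Longrightarrow> j < s \<Longrightarrow> E $$ (i,j) > 0"
    and idem: "E * E = E" and j: "j < s"
  shows "\<exists>t. \<forall>l<s. E $$ (l,j) = t * E $$ (l,0)"
proof -
  have s: "0 < s" using j by simp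
  have idem_entry: "(\<Sum>l = 0..<s. E $$ (u,l) * E $$ (l,j)) = E $$ (u,j)" if "u < s" "j < s" for u j
    using index_mult_mat_sum[OF E E that] idem by simp
  define t where "t = Min ((\<lambda>u. E $$ (u,j) / E $$ (u,0)) ` {0..<s})"
  have "t \<in> (\<lambda>u. E $$ (u,j) / E $$ (u,0)) ` {0..<s}" unfolding t_def using s by (intro Min_in) auto
  then obtain u where u: "u < s" "t = E $$ (u,j) / E $$ (u,0)" by auto
  define y where "y l = E $$ (l,j) - t * E $$ (l,0)" for l
  have y_nonneg: "y l \<ge> 0" if "l < s" for l
  proof -
    have "t \<le> E $$ (l,j) / E $$ (l,0)" unfolding t_def using that by (intro Min_le) auto
    then show ?thesis using pos[OF that s] unfolding y_def by (simp add: pos_le_divide_eq)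
  qed
  have "(\<Sum>l = 0..<s. E $$ (u,l) * y l)
      = (\<Sum>l = 0..<s. E $$ (u,l) * E $$ (l,j)) - t * (\<Sum>l = 0..<s. E $$ (u,l) * E $$ (l,0))"
    unfolding y_def by (simp add: sum_subtractf sum_distrib_left algebra_simps)
  also have "\<dots> = y u" unfolding y_def using idem_entry[OF u(1) j] idem_entry[OF u(1) s] by simp
  also have "\<dots> = 0" unfolding y_def u using pos[OF u(1) s] by simp
  finally have prod_zero: "\<forall>l\<in>{0..<s}. E $$ (u,l) * y l = 0"
    by (subst (asm) sum_nonneg_eq_0_iff)
      (auto intro!: mult_nonneg_nonneg y_nonneg less_imp_le[OF pos[OF u(1)]])
  have "y l = 0" if "l < s" for l
    using bspec[OF prod_zero, of l] pos[OF u(1) that] that by simp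
  then show ?thesis unfolding y_def by auto
qed

lemma trace_positive_idempotent:
  fixes E :: "real mat"
  assumes E: "E \<in> carrier_mat s s" and pos: "\<And>i j. i < s \<Longrightarrow> j < s \<Longrightarrow> E $$ (i,j) > 0"
    and idem: "E * E = E" and s: "0 < s"
  shows "trace E = 1"
proof -
  have "\<forall>j. \<exists>t. j < s \<longrightarrow> (\<forall>l<s. E $$ (l,j) = t * E $$ (l,0))"
    using positive_idempotent_columns_proportional[OF E pos idem] by blast
  then obtain t where t: "\<And>j l. j < s \<Longrightarrow> l < s \<Longrightarrow> E $$ (l,j) = t j * E $$ (l,0)"
    by metis
  have "E $$ (0,0) = (\<Sum>l = 0..<s. E $$ (0,l) * E $$ (l,0))"
    using index_mult_mat_sum[OF E E s s] idem by simp
  also have "\<dots> = E $$ (0,0) * (\<Sum>l = 0..<s. t l * E $$ (l,0))"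
    unfolding sum_distrib_left
  proof (intro sum.cong refl)
    fix l assume "l \<in> {0..<s}"
    then have "E $$ (0,l) = t l * E $$ (0,0)" using t[of l 0] s by simp
    then show "E $$ (0,l) * E $$ (l,0) = E $$ (0,0) * (t l * E $$ (l,0))" by simp
  qed
  finally have "(\<Sum>l = 0..<s. t l * E $$ (l,0)) = 1" using pos[OF s s] by simp
  moreover have "trace E = (\<Sum>l = 0..<s. t l * E $$ (l,0))"
    unfolding trace_def using E by (intro sum.cong) (auto intro: t)
  ultimately show ?thesis by simp
qed

lemma arith_progression_bounded_imp_step_zero:
  fixes x y C :: real
  assumes bounded: "\<And>m::nat. \<bar>y + real m * x\<bar> \<le> C"
  shows "x = 0"
proof (rule ccontr)
  assume "x \<noteq> 0"
  obtain m :: nat where "(C + \<bar>y\<bar>) / \<bar>x\<bar> < real m" using reals_Archimedean2 by blast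
  then have "C + \<bar>y\<bar> < real m * \<bar>x\<bar>" using \<open>x \<noteq> 0\<close> by (simp add: divide_less_eq)
  moreover have "real m * \<bar>x\<bar> \<le> \<bar>y + real m * x\<bar> + \<bar>y\<bar>" by (simp add: abs_mult[symmetric])
  ultimately show False using bounded[of m] by linarith
qed

lemma mult_pow_mat_affine:
  fixes X Y W :: "'a::comm_ring_1 mat"
  assumes W: "W \<in> carrier_mat s s" and X: "X \<in> carrier_mat s s" and Y: "Y \<in> carrier_mat s s"
    and XW: "X * W = X" and YW: "Y * W = Y + X"
  shows "Y * W ^\<^sub>m m = Y + of_nat m \<cdot>\<^sub>m X"
proof (induction m)
  case 0
  then show ?case using W X Y by (intro eq_matI) auto
next
  case (Suc m)
  have "Y * W ^\<^sub>m Suc m = (Y * W ^\<^sub>m m) * W"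
    using W Y by (simp add: assoc_mult_mat[of _ s s _ s _ s])
  also have "\<dots> = Y * W + of_nat m \<cdot>\<^sub>m (X * W)"
    unfolding Suc.IH using W X Y
    by (simp add: add_mult_distrib_mat[of _ s s] mult_smult_assoc_mat[of _ s s])
  also have "\<dots> = Y + of_nat (Suc m) \<cdot>\<^sub>m X"
    unfolding XW YW using X Y by (intro eq_matI) (auto simp: algebra_simps)
  finally show ?case .
qed

text \<open>This excludes Jordan blocks of size \<open>\<ge> 2\<close> at the eigenvalue \<open>1\<close>: on the
  range of \<open>W\<^sup>p (W - I)\<^sup>q\<^sup>-\<^sup>1\<close> the powers of \<open>W\<close> would grow linearly.\<close>

lemma bounded_pow_mat_linear_part_zero:
  fixes W X Y :: "real mat"
  assumes W: "W \<in> carrier_mat s s" and X: "X \<in> carrier_mat s s" and Y: "Y \<in> carrier_mat s s"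
    and XW: "X * W = X" and YW: "Y * W = Y + X"
    and bounded: "\<And>m i j. i < s \<Longrightarrow> j < s \<Longrightarrow> \<bar>(W ^\<^sub>m m) $$ (i,j)\<bar> \<le> K"
  shows "X = 0\<^sub>m s s"
proof -
  have "X $$ (u,v) = 0" if uv: "u < s" "v < s" for u v
  proof (rule arith_progression_bounded_imp_step_zero)
    fix m :: nat
    have "\<bar>Y $$ (u,v) + real m * X $$ (u,v)\<bar> = \<bar>\<Sum>l = 0..<s. Y $$ (u,l) * (W ^\<^sub>m m) $$ (l,v)\<bar>"
      using mult_pow_mat_affine[OF W X Y XW YW, of m] index_mult_mat_sum[OF Y _ uv, of "W ^\<^sub>m m"]
        W X Y uv by simp
    also have "\<dots> \<le> (\<Sum>l = 0..<s. \<bar>Y $$ (u,l)\<bar> * K)"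
      by (rule order_trans[OF sum_abs sum_mono]) (auto simp: abs_mult intro!: mult_left_mono bounded uv)
    finally show "\<bar>Y $$ (u,v) + real m * X $$ (u,v)\<bar> \<le> (\<Sum>l = 0..<s. \<bar>Y $$ (u,l)\<bar> * K)" .
  qed
  then show ?thesis using X by (intro eq_matI) auto
qed

lemma bounded_pow_mat_stabilizes:
  fixes W :: "real mat"
  assumes W: "W \<in> carrier_mat s s"
    and bounded: "\<And>m i j. i < s \<Longrightarrow> j < s \<Longrightarrow> \<bar>(W ^\<^sub>m m) $$ (i,j)\<bar> \<le> K"
    and ann: "W ^\<^sub>m p * (W - 1\<^sub>m s) ^\<^sub>m q = 0\<^sub>m s s"
  shows "W ^\<^sub>m Suc p = W ^\<^sub>m p"
  using ann
proof (induction q)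
  case 0
  then show ?case using W by simp
next
  case (Suc q)
  have W1: "W - 1\<^sub>m s \<in> carrier_mat s s" using W by (simp add: minus_carrier_mat)
  define X where "X = W ^\<^sub>m p * (W - 1\<^sub>m s) ^\<^sub>m q"
  have X: "X \<in> carrier_mat s s"
    unfolding X_def by (rule mult_carrier_mat[OF pow_carrier_mat[OF W] pow_carrier_mat[OF W1]])
  have "X * (W - 1\<^sub>m s) = 0\<^sub>m s s"
    using Suc.prems W W1 unfolding X_def by (simp add: assoc_mult_mat[of _ s s _ s _ s])
  then have XW: "X * W = X" using mult_eq_add_mult_minus_one[OF X W] X by simp
  show ?case
  proof (cases "q = 0")
    case True
    then show ?thesis using XW W unfolding X_def by simp
  next
    case False
    then obtain q' where q: "q = Suc q'" using not0_implies_Suc by blast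
    define Y where "Y = W ^\<^sub>m p * (W - 1\<^sub>m s) ^\<^sub>m q'"
    have Y: "Y \<in> carrier_mat s s"
      unfolding Y_def by (rule mult_carrier_mat[OF pow_carrier_mat[OF W] pow_carrier_mat[OF W1]])
    have "Y * (W - 1\<^sub>m s) = X"
      unfolding X_def Y_def q using W W1 by (simp add: assoc_mult_mat[of _ s s _ s _ s])
    then have "Y * W = Y + X" using mult_eq_add_mult_minus_one[OF Y W] by simp
    then have "X = 0\<^sub>m s s" by (rule bounded_pow_mat_linear_part_zero[OF W X Y XW _ bounded])
    then show ?thesis using Suc.IH unfolding X_def by simp
  qed
qed

text \<open>A positive power \<open>W\<^sup>r\<close> turns the trace into a bound on all entries:
  \<open>(W\<^sup>m)\<^sub>i\<^sub>j (W\<^sup>r)\<^sub>j\<^sub>i \<le> (W\<^sup>m\<^sup>+\<^sup>r)\<^sub>i\<^sub>i \<le> tr W\<^sup>m\<^sup>+\<^sup>r\<close>.\<close>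

lemma pow_mat_entries_bounded_by_trace:
  fixes W :: "real mat"
  assumes W: "W \<in> carrier_mat s s"
    and nonneg: "\<And>i j. i < s \<Longrightarrow> j < s \<Longrightarrow> W $$ (i,j) \<ge> 0"
    and pos: "\<And>i j. i < s \<Longrightarrow> j < s \<Longrightarrow> \<alpha> \<le> (W ^\<^sub>m r) $$ (i,j)" and "0 < \<alpha>"
    and trace_bound: "\<And>m. trace (W ^\<^sub>m (m + r)) \<le> a"
    and ij: "i < s" "j < s"
  shows "\<bar>(W ^\<^sub>m m) $$ (i,j)\<bar> \<le> a / \<alpha>"
proof -
  have nonneg_pow: "(W ^\<^sub>m k) $$ (u,v) \<ge> 0" if "u < s" "v < s" for k u v
    using nonneg_pow_mat[OF W nonneg that] .
  have "(W ^\<^sub>m m) $$ (i,j) * \<alpha> \<le> (W ^\<^sub>m m) $$ (i,j) * (W ^\<^sub>m r) $$ (j,i)"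
    using pos[of j i] ij nonneg_pow[OF ij] by (intro mult_left_mono) auto
  also have "\<dots> \<le> (W ^\<^sub>m m * W ^\<^sub>m r) $$ (i,i)"
    by (rule index_mult_mat_ge[OF pow_carrier_mat[OF W] pow_carrier_mat[OF W] nonneg_pow nonneg_pow
          ij(1) ij(1) ij(2)])
  also have "\<dots> = (W ^\<^sub>m (m + r)) $$ (i,i)" using pow_mat_add[OF W, of m r] by simp
  also have "\<dots> \<le> trace (W ^\<^sub>m (m + r))"
    unfolding trace_def using W ij nonneg_pow by (intro member_le_sum) auto
  also have "\<dots> \<le> a" by (rule trace_bound)
  finally have "(W ^\<^sub>m m) $$ (i,j) \<le> a / \<alpha>" using \<open>0 < \<alpha>\<close> by (simp add: pos_le_divide_eq)
  then show ?thesis using nonneg_pow[OF ij] by simp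
qed

lemma primitive_annihilated_trace_eq_1:
  fixes W :: "real mat"
  assumes W: "W \<in> carrier_mat s s" and "0 < s"
    and nonneg: "\<And>i j. i < s \<Longrightarrow> j < s \<Longrightarrow> W $$ (i,j) \<ge> 0"
    and primitive: "\<And>m i j. m0 \<le> m \<Longrightarrow> i < s \<Longrightarrow> j < s \<Longrightarrow> (W ^\<^sub>m m) $$ (i,j) > 0"
    and ann: "W ^\<^sub>m p * (W - 1\<^sub>m s) ^\<^sub>m q = 0\<^sub>m s s"
  shows "trace W = 1"
proof -
  define r where "r = Suc m0"
  have trace_pow: "trace (W ^\<^sub>m m) = trace W" if "m \<noteq> 0" for m
    using trace_pow_annihilated[OF W ann that] .
  define \<alpha> where "\<alpha> = Min ((\<lambda>(i,j). (W ^\<^sub>m r) $$ (i,j)) ` ({0..<s} \<times> {0..<s}))"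
  have "\<alpha> \<in> (\<lambda>(i,j). (W ^\<^sub>m r) $$ (i,j)) ` ({0..<s} \<times> {0..<s})"
    unfolding \<alpha>_def using \<open>0 < s\<close> by (intro Min_in) auto
  then have "0 < \<alpha>" using primitive[of r] unfolding r_def by auto
  have \<alpha>_le: "\<alpha> \<le> (W ^\<^sub>m r) $$ (i,j)" if "i < s" "j < s" for i j
    unfolding \<alpha>_def using that by (intro Min_le) auto
  have trace_bound: "trace (W ^\<^sub>m (m + r)) \<le> trace W" for m
    using trace_pow[of "m + r"] unfolding r_def by simp
  have "\<bar>(W ^\<^sub>m m) $$ (i,j)\<bar> \<le> trace W / \<alpha>" if "i < s" "j < s" for m i j
    by (rule pow_mat_entries_bounded_by_trace[OF W nonneg \<alpha>_le \<open>0 < \<alpha>\<close> trace_bound that])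
  then have stable_Suc: "W ^\<^sub>m Suc p = W ^\<^sub>m p"
    by (rule bounded_pow_mat_stabilizes[OF W _ ann])
  have stable: "W ^\<^sub>m (p + d) = W ^\<^sub>m p" for d
  proof (induction d)
    case (Suc d)
    have "W ^\<^sub>m (p + Suc d) = W ^\<^sub>m (p + d) * W" by simp
    then show ?case using Suc.IH stable_Suc by simp
  qed simp
  define E where "E = W ^\<^sub>m (p + r)"
  have E: "E \<in> carrier_mat s s" unfolding E_def using W by simp
  have "E * E = E"
    unfolding E_def pow_mat_add[OF W, symmetric] using stable[of "r + (p + r)"] stable[of r]
    by (simp add: add.assoc)
  moreover have "E $$ (i,j) > 0" if "i < s" "j < s" for i j
    unfolding E_def by (rule primitive) (use that in \<open>simp_all add: r_def\<close>)
  ultimately have "trace E = 1" using trace_positive_idempotent[OF E] \<open>0 < s\<close> by blast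
  moreover have "trace E = trace W" unfolding E_def by (rule trace_pow) (simp add: r_def)
  ultimately show ?thesis by simp
qed

section \<open>Closed index sets and principal submatrices\<close>

definition closed_set :: "nat \<Rightarrow> nat set \<Rightarrow> 'a::zero mat \<Rightarrow> bool" where
  "closed_set n S A \<longleftrightarrow>
     S \<subseteq> {0..<n} \<and> A \<in> carrier_mat n n \<and> (\<forall>i\<in>S. \<forall>j<n. j \<notin> S \<longrightarrow> A $$ (i,j) = 0)"

text \<open>Below, \<open>f\<close> enumerates a closed set \<open>S\<close> as \<open>f ` {0..<s}\<close>.\<close>

definition principal_submat :: "(nat \<Rightarrow> nat) \<Rightarrow> nat \<Rightarrow> 'a mat \<Rightarrow> 'a mat" where
  "principal_submat f s A = mat s s (\<lambda>(i,j). A $$ (f i, f j))"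

lemma principal_submat_carrier[simp]: "principal_submat f s A \<in> carrier_mat s s"
  unfolding principal_submat_def by simp

lemma principal_submat_dim[simp]:
  "dim_row (principal_submat f s A) = s" "dim_col (principal_submat f s A) = s"
  unfolding principal_submat_def by simp_all

lemma principal_submat_index[simp]:
  "i < s \<Longrightarrow> j < s \<Longrightarrow> principal_submat f s A $$ (i,j) = A $$ (f i, f j)"
  unfolding principal_submat_def by simp

lemma bij_betw_upt_mem:
  fixes f :: "nat \<Rightarrow> nat"
  assumes "bij_betw f {0..<s} S" "S \<subseteq> {0..<n}" "i < s"
  shows "f i \<in> S" "f i < n"
proof -
  show "f i \<in> S" using bij_betw_apply[OF assms(1)] assms(3) by simp
  then show "f i < n" using assms(2) by auto
qed

lemma closed_set_one: "S \<subseteq> {0..<n} \<Longrightarrow> closed_set n S (1\<^sub>m n)"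
  unfolding closed_set_def by auto

lemma closed_set_minus:
  fixes A B :: "'a::ab_group_add mat"
  shows "closed_set n S A \<Longrightarrow> closed_set n S B \<Longrightarrow> closed_set n S (A - B)"
  unfolding closed_set_def by (auto simp: minus_carrier_mat)

lemma closed_set_mult:
  fixes A B :: "'a::comm_ring_1 mat"
  assumes clA: "closed_set n S A" and clB: "closed_set n S B"
  shows "closed_set n S (A * B)"
proof -
  have A: "A \<in> carrier_mat n n" and B: "B \<in> carrier_mat n n" and S: "S \<subseteq> {0..<n}"
    using clA clB unfolding closed_set_def by auto
  have "(A * B) $$ (i,j) = 0" if i: "i \<in> S" and j: "j < n" "j \<notin> S" for i j
  proof -
    have "(A * B) $$ (i,j) = (\<Sum>l = 0..<n. A $$ (i,l) * B $$ (l,j))"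
      using A B S i j by (intro index_mult_mat_sum) auto
    also have "\<dots> = 0"
      using clA clB i j unfolding closed_set_def by (intro sum.neutral ballI) (metis mult_zero_left
          mult_zero_right atLeastLessThan_iff)
    finally show ?thesis .
  qed
  then show ?thesis using A B S unfolding closed_set_def by auto
qed

lemma closed_set_pow:
  fixes A :: "'a::comm_ring_1 mat"
  assumes "closed_set n S A"
  shows "closed_set n S (A ^\<^sub>m m)"
proof (induction m)
  case 0
  then show ?case using assms closed_set_one[of S n] unfolding closed_set_def by auto
next
  case (Suc m)
  then show ?case using closed_set_mult[OF Suc assms] by simp
qed

lemma principal_submat_mult:
  fixes A B :: "'a::comm_ring_1 mat"
  assumes f: "bij_betw f {0..<s} S" and cl: "closed_set n S A" and B: "B \<in> carrier_mat n n"
  shows "principal_submat f s (A * B) = principal_submat f s A * principal_submat f s B"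
proof (rule eq_matI)
  have A: "A \<in> carrier_mat n n" and S: "S \<subseteq> {0..<n}" using cl unfolding closed_set_def by auto
  fix i j assume "i < dim_row (principal_submat f s A * principal_submat f s B)"
    "j < dim_col (principal_submat f s A * principal_submat f s B)"
  then have i: "i < s" and j: "j < s" by auto
  have fij: "f i < n" "f j < n" "f i \<in> S" using bij_betw_upt_mem[OF f S] i j by auto
  have "principal_submat f s (A * B) $$ (i,j) = (\<Sum>l = 0..<n. A $$ (f i,l) * B $$ (l,f j))"
    using fij i j by (simp del: index_mult_mat(1) add: index_mult_mat_sum[OF A B])
  also have "\<dots> = (\<Sum>l\<in>S. A $$ (f i,l) * B $$ (l,f j))"
    using S cl fij unfolding closed_set_def by (intro sum.mono_neutral_right) auto
  also have "\<dots> = (\<Sum>l = 0..<s. A $$ (f i,f l) * B $$ (f l,f j))"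
    using sum.reindex_bij_betw[OF f, of "\<lambda>l. A $$ (f i,l) * B $$ (l,f j)"] by simp
  also have "\<dots> = (principal_submat f s A * principal_submat f s B) $$ (i,j)"
    using i j by (subst index_mult_mat_sum[of _ s s _ s]) auto
  finally show "principal_submat f s (A * B) $$ (i,j)
      = (principal_submat f s A * principal_submat f s B) $$ (i,j)" .
qed simp_all

lemma principal_submat_one:
  assumes f: "bij_betw f {0..<s} S" and S: "S \<subseteq> {0..<n}"
  shows "principal_submat f s (1\<^sub>m n) = (1\<^sub>m s :: 'a::comm_ring_1 mat)"
proof (rule eq_matI)
  fix i j assume "i < dim_row (1\<^sub>m s :: 'a mat)" "j < dim_col (1\<^sub>m s :: 'a mat)"
  then have ij: "i < s" "j < s" by auto
  have "f i < n" "f j < n" using bij_betw_upt_mem[OF f S] ij by auto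
  moreover have "f i = f j \<longleftrightarrow> i = j"
    using f ij unfolding bij_betw_def by (auto dest: inj_onD)
  ultimately show "principal_submat f s (1\<^sub>m n) $$ (i,j) = (1\<^sub>m s :: 'a mat) $$ (i,j)"
    using ij by simp
qed simp_all

lemma principal_submat_minus:
  fixes A B :: "'a::comm_ring_1 mat"
  assumes f: "bij_betw f {0..<s} S" and S: "S \<subseteq> {0..<n}"
    and A: "A \<in> carrier_mat n n" and B: "B \<in> carrier_mat n n"
  shows "principal_submat f s (A - B) = principal_submat f s A - principal_submat f s B"
  using bij_betw_upt_mem[OF f S] A B by (intro eq_matI) auto

lemma principal_submat_pow:
  fixes A :: "'a::comm_ring_1 mat"
  assumes f: "bij_betw f {0..<s} S" and cl: "closed_set n S A"
  shows "principal_submat f s (A ^\<^sub>m m) = principal_submat f s A ^\<^sub>m m"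
proof (induction m)
  case 0
  have "S \<subseteq> {0..<n}" "A \<in> carrier_mat n n" using cl unfolding closed_set_def by auto
  then show ?case using principal_submat_one[OF f] by simp
next
  case (Suc m)
  have "A \<in> carrier_mat n n" using cl unfolding closed_set_def by auto
  then show ?case using principal_submat_mult[OF f closed_set_pow[OF cl]] Suc by simp
qed

lemma principal_submat_annihilated:
  fixes A :: "'a::comm_ring_1 mat"
  assumes f: "bij_betw f {0..<s} S" and cl: "closed_set n S A"
    and ann: "A ^\<^sub>m p * (A - 1\<^sub>m n) ^\<^sub>m q = 0\<^sub>m n n"
  shows "principal_submat f s A ^\<^sub>m p * (principal_submat f s A - 1\<^sub>m s) ^\<^sub>m q = 0\<^sub>m s s"
proof -
  have S: "S \<subseteq> {0..<n}" and A: "A \<in> carrier_mat n n" using cl unfolding closed_set_def by auto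
  have cl1: "closed_set n S (A - 1\<^sub>m n)" by (rule closed_set_minus[OF cl closed_set_one[OF S]])
  have "principal_submat f s (A ^\<^sub>m p * (A - 1\<^sub>m n) ^\<^sub>m q)
      = principal_submat f s (A ^\<^sub>m p) * principal_submat f s ((A - 1\<^sub>m n) ^\<^sub>m q)"
    using A by (intro principal_submat_mult[OF f closed_set_pow[OF cl]]) (simp add: minus_carrier_mat)
  also have "\<dots> = principal_submat f s A ^\<^sub>m p * (principal_submat f s A - 1\<^sub>m s) ^\<^sub>m q"
    by (simp add: principal_submat_pow[OF f cl] principal_submat_pow[OF f cl1]
        principal_submat_minus[OF f S A one_carrier_mat] principal_submat_one[OF f S])
  finally have eq: "principal_submat f s (0\<^sub>m n n)
      = principal_submat f s A ^\<^sub>m p * (principal_submat f s A - 1\<^sub>m s) ^\<^sub>m q"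
    unfolding ann .
  moreover have "principal_submat f s (0\<^sub>m n n) = (0\<^sub>m s s :: 'a mat)"
    using bij_betw_upt_mem[OF f S] by (intro eq_matI) auto
  ultimately show ?thesis by simp
qed

section \<open>Primitive closed sets of nonnegative matrices\<close>

definition reach_set :: "nat \<Rightarrow> real mat \<Rightarrow> nat \<Rightarrow> nat set" where
  "reach_set n M i = {l. l < n \<and> (\<exists>m. (M ^\<^sub>m m) $$ (i,l) > 0)}"

lemma closed_set_reach_set:
  fixes M :: "real mat"
  assumes M: "M \<in> carrier_mat n n" and "i < n"
    and nonneg: "\<And>i j. i < n \<Longrightarrow> j < n \<Longrightarrow> M $$ (i,j) \<ge> 0"
  shows "closed_set n (reach_set n M i) M"
  unfolding closed_set_def
proof (intro conjI ballI allI impI)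
  show "reach_set n M i \<subseteq> {0..<n}" unfolding reach_set_def by auto
  show "M \<in> carrier_mat n n" by fact
  fix l l' assume "l \<in> reach_set n M i" "l' < n" "l' \<notin> reach_set n M i"
  then obtain m where "l < n" and pos: "(M ^\<^sub>m m) $$ (i,l) > 0" unfolding reach_set_def by auto
  have "(M ^\<^sub>m m) $$ (i,l) * M $$ (l,l') \<le> (M ^\<^sub>m Suc m) $$ (i,l')"
    using index_mult_mat_ge[OF pow_carrier_mat[OF M] M nonneg_pow_mat[OF M nonneg] nonneg
        \<open>i < n\<close> \<open>l' < n\<close> \<open>l < n\<close>] by simp
  moreover have "\<not> (M ^\<^sub>m Suc m) $$ (i,l') > 0"
    using \<open>l' \<notin> reach_set n M i\<close> \<open>l' < n\<close> unfolding reach_set_def by blast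
  ultimately have "(M ^\<^sub>m m) $$ (i,l) * M $$ (l,l') \<le> 0" by linarith
  then show "M $$ (l,l') = 0"
    using pos nonneg[OF \<open>l < n\<close> \<open>l' < n\<close>] by (simp add: mult_le_0_iff)
qed

lemma reach_set_subset:
  fixes M :: "real mat"
  assumes cl: "closed_set n S M" and "i \<in> S"
  shows "reach_set n M i \<subseteq> S"
proof
  fix l assume "l \<in> reach_set n M i"
  then obtain m where "l < n" "(M ^\<^sub>m m) $$ (i,l) > 0" unfolding reach_set_def by auto
  then show "l \<in> S" using closed_set_pow[OF cl, of m] \<open>i \<in> S\<close> unfolding closed_set_def by force
qed

text \<open>A nonempty closed set of least cardinality is the reach set of each of its elements.\<close>

lemma exists_strongly_connected_closed_set:
  fixes M :: "real mat"
  assumes M: "M \<in> carrier_mat n n" and "0 < n"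
    and nonneg: "\<And>i j. i < n \<Longrightarrow> j < n \<Longrightarrow> M $$ (i,j) \<ge> 0"
  obtains S where "S \<noteq> {}" "closed_set n S M"
    "\<And>i j. i \<in> S \<Longrightarrow> j \<in> S \<Longrightarrow> \<exists>m. (M ^\<^sub>m m) $$ (i,j) > 0"
proof -
  define C where "C S \<longleftrightarrow> S \<noteq> {} \<and> closed_set n S M" for S
  have "C {0..<n}" unfolding C_def closed_set_def using M \<open>0 < n\<close> by auto
  then obtain S where "C S" and min: "\<And>S'. C S' \<Longrightarrow> card S \<le> card S'"
    using ex_has_least_nat[of C "{0..<n}" card] by blast
  then have "S \<noteq> {}" and cl: "closed_set n S M" and S: "S \<subseteq> {0..<n}"
    unfolding C_def closed_set_def by auto
  have "reach_set n M i = S" if "i \<in> S" for i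
  proof (rule card_seteq[OF finite_subset[OF S finite_atLeastLessThan] reach_set_subset[OF cl that]])
    have "i < n" using that S by auto
    then have "i \<in> reach_set n M i" unfolding reach_set_def using M by (auto intro!: exI[of _ 0])
    then show "card S \<le> card (reach_set n M i)"
      using min closed_set_reach_set[OF M \<open>i < n\<close> nonneg] unfolding C_def by blast
  qed
  then show ?thesis using that \<open>S \<noteq> {}\<close> cl unfolding reach_set_def by blast
qed

lemma pow_mat_pos_mono:
  fixes M :: "real mat"
  assumes M: "M \<in> carrier_mat n n"
    and nonneg: "\<And>i j. i < n \<Longrightarrow> j < n \<Longrightarrow> M $$ (i,j) \<ge> 0"
    and diag: "\<And>i. i < n \<Longrightarrow> M $$ (i,i) > 0"
    and pos: "(M ^\<^sub>m m) $$ (i,j) > 0" and "m \<le> m'" and ij: "i < n" "j < n"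
  shows "(M ^\<^sub>m m') $$ (i,j) > 0"
proof -
  obtain d where m': "m' = m + d" using \<open>m \<le> m'\<close> le_Suc_ex by blast
  have "(M ^\<^sub>m (m + d)) $$ (i,j) > 0"
  proof (induction d)
    case 0
    show ?case using pos by simp
  next
    case (Suc d)
    have "0 < (M ^\<^sub>m (m + d)) $$ (i,j) * M $$ (j,j)" using Suc.IH diag[OF ij(2)] by simp
    also have "\<dots> \<le> (M ^\<^sub>m (m + Suc d)) $$ (i,j)"
      using index_mult_mat_ge[OF pow_carrier_mat[OF M] M nonneg_pow_mat[OF M nonneg] nonneg ij ij(2)]
      by simp
    finally show ?case .
  qed
  then show ?thesis unfolding m' .
qed

lemma exists_primitive_closed_set:
  fixes M :: "real mat"
  assumes M: "M \<in> carrier_mat n n" and "0 < n"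
    and nonneg: "\<And>i j. i < n \<Longrightarrow> j < n \<Longrightarrow> M $$ (i,j) \<ge> 0"
    and diag: "\<And>i. i < n \<Longrightarrow> M $$ (i,i) > 0"
  obtains S m0 where "S \<noteq> {}" "closed_set n S M"
    "\<And>m i j. m0 \<le> m \<Longrightarrow> i \<in> S \<Longrightarrow> j \<in> S \<Longrightarrow> (M ^\<^sub>m m) $$ (i,j) > 0"
proof -
  obtain S where "S \<noteq> {}" and cl: "closed_set n S M"
    and reach: "\<And>i j. i \<in> S \<Longrightarrow> j \<in> S \<Longrightarrow> \<exists>m. (M ^\<^sub>m m) $$ (i,j) > 0"
    using exists_strongly_connected_closed_set[OF M \<open>0 < n\<close> nonneg] by blast
  have S: "S \<subseteq> {0..<n}" using cl unfolding closed_set_def by simp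
  have "eventually (\<lambda>m. \<forall>x\<in>S \<times> S. (M ^\<^sub>m m) $$ x > 0) sequentially"
  proof (rule eventually_ball_finite)
    show "finite (S \<times> S)" using finite_subset[OF S] by simp
    show "\<forall>x\<in>S \<times> S. eventually (\<lambda>m. (M ^\<^sub>m m) $$ x > 0) sequentially"
    proof clarify
      fix i j assume ij: "i \<in> S" "j \<in> S"
      then have "i < n" "j < n" using S by auto
      obtain m where "(M ^\<^sub>m m) $$ (i,j) > 0" using reach ij by blast
      then have "\<forall>m'\<ge>m. (M ^\<^sub>m m') $$ (i,j) > 0"
        using pow_mat_pos_mono[OF M nonneg diag _ _ \<open>i < n\<close> \<open>j < n\<close>] by blast
      then show "eventually (\<lambda>m. (M ^\<^sub>m m) $$ (i,j) > 0) sequentially"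
        unfolding eventually_sequentially by blast
    qed
  qed
  then obtain m0 where "\<forall>m\<ge>m0. \<forall>x\<in>S \<times> S. (M ^\<^sub>m m) $$ x > 0"
    unfolding eventually_sequentially by blast
  then show ?thesis using that \<open>S \<noteq> {}\<close> cl by blast
qed

lemma annihilated_nonneg_const_diagonal_reciprocal_nat:
  fixes M :: "real mat"
  assumes M: "M \<in> carrier_mat n n" and "0 < n"
    and nonneg: "\<And>i j. i < n \<Longrightarrow> j < n \<Longrightarrow> M $$ (i,j) \<ge> 0"
    and diag: "\<And>i. i < n \<Longrightarrow> M $$ (i,i) = \<gamma>" and "0 < \<gamma>"
    and ann: "M ^\<^sub>m p * (M - 1\<^sub>m n) ^\<^sub>m q = 0\<^sub>m n n"
  shows "\<exists>s::nat. real s * \<gamma> = 1"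
proof -
  obtain S m0 where "S \<noteq> {}" and cl: "closed_set n S M"
    and pos: "\<And>m i j. m0 \<le> m \<Longrightarrow> i \<in> S \<Longrightarrow> j \<in> S \<Longrightarrow> (M ^\<^sub>m m) $$ (i,j) > 0"
    using exists_primitive_closed_set[OF M \<open>0 < n\<close> nonneg] diag \<open>0 < \<gamma>\<close> by metis
  have S: "S \<subseteq> {0..<n}" using cl unfolding closed_set_def by simp
  define s where "s = card S"
  have "0 < s" using \<open>S \<noteq> {}\<close> finite_subset[OF S] unfolding s_def by (simp add: card_gt_0_iff)
  obtain f where f: "bij_betw f {0..<s} S"
    unfolding s_def using ex_bij_betw_nat_finite[OF finite_subset[OF S]] by blast
  note f_mem = bij_betw_upt_mem[OF f S]
  define W where "W = principal_submat f s M"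
  have "trace W = 1"
  proof (rule primitive_annihilated_trace_eq_1)
    show "W \<in> carrier_mat s s" unfolding W_def by simp
    show "W $$ (i,j) \<ge> 0" if "i < s" "j < s" for i j
      unfolding W_def using nonneg f_mem that by simp
    show "(W ^\<^sub>m m) $$ (i,j) > 0" if "m0 \<le> m" "i < s" "j < s" for m i j
      unfolding W_def principal_submat_pow[OF f cl, symmetric] using pos f_mem that by simp
    show "W ^\<^sub>m p * (W - 1\<^sub>m s) ^\<^sub>m q = 0\<^sub>m s s"
      unfolding W_def by (rule principal_submat_annihilated[OF f cl ann])
  qed fact
  moreover have "trace W = (\<Sum>i = 0..<s. \<gamma>)"
    unfolding trace_def W_def using f_mem diag by (intro sum.cong) auto
  ultimately show ?thesis by auto
qed

section \<open>The multiset \<open>\<sigma>\<^sub>n\<close>\<close>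

lemma sum_mset_sigma_n: "sum_mset (sigma_n k) = 0"
proof -
  have "(of_nat (k + 1) :: complex) \<noteq> 0" by (metis of_nat_eq_0_iff add_is_0 one_neq_zero)
  then show ?thesis unfolding sigma_n_def by (simp add: field_simps)
qed

lemma nonneg_trace_zero_diag:
  fixes A :: "real mat"
  assumes A: "A \<in> carrier_mat n n"
    and nonneg: "\<And>i j. i < n \<Longrightarrow> j < n \<Longrightarrow> A $$ (i,j) \<ge> 0"
    and "trace A = 0" and "i < n"
  shows "A $$ (i,i) = 0"
proof -
  have "(\<Sum>i = 0..<n. A $$ (i,i)) = 0" using \<open>trace A = 0\<close> A unfolding trace_def by simp
  then show ?thesis using nonneg \<open>i < n\<close> by (subst (asm) sum_nonneg_eq_0_iff) auto
qed

lemma shifted_two_eigenvalues_annihilated: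
  fixes A :: "real mat"
  assumes A: "A \<in> carrier_mat n n" and "0 \<le> c"
    and cp: "char_poly (map_mat complex_of_real A)
      = (\<Prod>a\<leftarrow>replicate p (- complex_of_real c) @ replicate q 1. [:-a, 1:])"
  defines "M \<equiv> (1 / (1 + c)) \<cdot>\<^sub>m (A + c \<cdot>\<^sub>m 1\<^sub>m n)"
  shows "M ^\<^sub>m p * (M - 1\<^sub>m n) ^\<^sub>m q = 0\<^sub>m n n"
proof -
  have AC: "map_mat complex_of_real A \<in> carrier_mat n n" using A by simp
  have M: "M \<in> carrier_mat n n" unfolding M_def using A by simp
  have "map_mat complex_of_real M = (1 / (1 - - complex_of_real c)) \<cdot>\<^sub>m
      (map_mat complex_of_real A - (- complex_of_real c) \<cdot>\<^sub>m 1\<^sub>m n)"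
    unfolding M_def using A by (intro eq_matI) auto
  moreover have "- complex_of_real c \<noteq> 1" using \<open>0 \<le> c\<close> by (simp add: complex_eq_iff)
  ultimately have "map_mat complex_of_real M ^\<^sub>m p * (map_mat complex_of_real M - 1\<^sub>m n) ^\<^sub>m q
      = 0\<^sub>m n n"
    using two_eigenvalues_annihilated[OF AC _ cp] by simp
  then show ?thesis unfolding of_real_mat_annihilated_iff[OF M] .
qed

lemma sigma_n_not_realizable:
  assumes "2 \<le> k"
  shows "\<not> realizable (sigma_n k)"
proof
  assume "realizable (sigma_n k)"
  define n where "n = 2 * k + 1"
  define c :: real where "c = real k / real (k + 1)"
  define es where "es = replicate (k + 1) (- complex_of_real c) @ replicate k 1"
  have es: "sigma_n k = mset es" unfolding sigma_n_def es_def c_def by (simp add: add.commute)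
  have "size (mset es) = n" unfolding es_def n_def by simp
  moreover have "(\<Prod>x\<in>#mset es. [:-x, 1:]) = (\<Prod>a\<leftarrow>es. [:-a, 1:])"
    by (metis mset_map prod_mset_prod_list)
  ultimately obtain A :: "real mat" where A: "A \<in> carrier_mat n n"
    and nonneg: "\<And>i j. i < n \<Longrightarrow> j < n \<Longrightarrow> A $$ (i,j) \<ge> 0"
    and cp: "char_poly (map_mat complex_of_real A) = (\<Prod>a\<leftarrow>es. [:-a, 1:])"
    using \<open>realizable (sigma_n k)\<close> unfolding realizable_def es by auto
  have "complex_of_real (trace A) = sum_mset (sigma_n k)"
    using trace_eq_sum_list_eigenvalues[OF _ cp] A
    unfolding trace_of_real_mat[OF A, symmetric] es by (simp add: sum_mset_sum_list)
  then have diag0: "A $$ (i,i) = 0" if "i < n" for i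
    using nonneg_trace_zero_diag[OF A nonneg _ that] sum_mset_sigma_n by simp
  define M where "M = (1 / (1 + c)) \<cdot>\<^sub>m (A + c \<cdot>\<^sub>m 1\<^sub>m n)"
  have M: "M \<in> carrier_mat n n" unfolding M_def using A by simp
  have ann: "M ^\<^sub>m (k + 1) * (M - 1\<^sub>m n) ^\<^sub>m k = 0\<^sub>m n n"
    unfolding M_def using A cp unfolding es_def c_def
    by (intro shifted_two_eigenvalues_annihilated) auto
  have diag: "M $$ (i,i) = real k / real (2 * k + 1)" if "i < n" for i
  proof -
    have "M $$ (i,i) = c / (1 + c)" unfolding M_def using that A diag0[OF that] by simp
    also have "\<dots> = (real k / real (k + 1)) * (real (k + 1) / real (2 * k + 1))"
      unfolding c_def by (simp add: field_simps)
    finally show ?thesis by simp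
  qed
  have "M $$ (i,j) \<ge> 0" if "i < n" "j < n" for i j
    unfolding M_def c_def using that A nonneg[OF that] by auto
  then obtain s :: nat where "real s * (real k / real (2 * k + 1)) = 1"
    using annihilated_nonneg_const_diagonal_reciprocal_nat[OF M _ _ diag _ ann] \<open>2 \<le> k\<close> unfolding n_def by auto
  then have "s * k = 2 * k + 1" by (simp add: field_simps flip: of_nat_mult)
  then have "k dvd 2 * k + 1" by (metis dvd_triv_right)
  then have "k dvd 1" using dvd_add_right_iff[of k "2 * k" 1] by simp
  then show False using \<open>2 \<le> k\<close> by simp
qed

theorem theorem2:
  fixes k :: nat
  assumes "k \<ge> 2"
  shows "size (sigma_n k) = 2 * k + 1 \<and> sum_mset (sigma_n k) = 0 \<and> \<not> realizable (sigma_n k)"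
  using sum_mset_sigma_n sigma_n_not_realizable[OF assms] by (simp add: sigma_n_def)

end
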